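(* Let $\epsilon>0$, $\delta>0$, and let $\rho$ be a pure $n$-qubit state. Then $N=O(n\log(1/\delta)/\epsilon^2)$ pairs of copies $\rho\otimes\rho$ suffice to produce, with probability $1-\delta$, estimates $\pi_\rho(x_{1:k})$ such that $|\pi_\rho(x_{1:k})-p_\rho(x_{1:k})|\le\epsilon/2^k$ simultaneously for all $x\in\{0,1\}^{2n}$ and all $1\le k\le n$.
   Context: Pauli strings are labelled by $x=(x_1,\dots,x_n)$ with $x_i=(v_i,w_i)\in\{0,1\}^2$, via $P_x=i^{v\cdot w}(X^{v_1}Z^{w_1})\otimes\cdots\otimes(X^{v_n}Z^{w_n})$. The Pauli distribution of a pure state is $p_\rho(x)=\mathrm{tr}(\rho P_x)^2/2^n$ on $\{0,1\}^{2n}$, and $p_\rho(x_{1:k})=\sum_{x_{k+1},\dots,x_n}p_\rho(x)$ is the marginal on the first $k$ qubit labels $x_1,\dots,x_k$ (each $x_i$ a pair of bits). *)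

theory Defs
  imports Complex_Main
begin

(* Computational basis states of m qubits: bit lists of length m (head = qubit 1). *)
definition bitstrs :: "nat \<Rightarrow> bool list set" where
  "bitstrs m = {bs. length bs = m}"

(* Pauli labels x = (x_1,...,x_m), x_i = (v_i,w_i) *)
definition labels :: "nat \<Rightarrow> (bool \<times> bool) list set" where
  "labels m = {x. length x = m}"

definition bdot :: "bool list \<Rightarrow> bool list \<Rightarrow> nat" where
  "bdot v w = length (filter id (map2 (\<and>) v w))"

definition pure_state :: "nat \<Rightarrow> (bool list \<Rightarrow> complex) \<Rightarrow> bool" where
  "pure_state n \<psi> \<longleftrightarrow> (\<Sum>b\<in>bitstrs n. (cmod (\<psi> b))^2) = 1"

(* tr(rho P_x) = <psi|P_x|psi>, where
   P_x |b> = i^(v.w) (-1)^(w.b) |b xor v>  for P_x = i^(v.w) (X^v1 Z^w1) (x) ... (x) (X^vn Z^wn) *)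
definition pauli_expect :: "nat \<Rightarrow> (bool list \<Rightarrow> complex) \<Rightarrow> (bool \<times> bool) list \<Rightarrow> complex" where
  "pauli_expect n \<psi> x =
     (let v = map fst x; w = map snd x in
       \<i> ^ (bdot v w) *
       (\<Sum>b\<in>bitstrs n. cnj (\<psi> (map2 (\<noteq>) b v)) * (-1) ^ (bdot w b) * \<psi> b))"

definition pauli_dist :: "nat \<Rightarrow> (bool list \<Rightarrow> complex) \<Rightarrow> (bool \<times> bool) list \<Rightarrow> real" where
  "pauli_dist n \<psi> x = Re ((pauli_expect n \<psi> x)^2) / 2^n"

definition pauli_marg :: "nat \<Rightarrow> (bool list \<Rightarrow> complex) \<Rightarrow> nat \<Rightarrow> (bool \<times> bool) list \<Rightarrow> real" where
  "pauli_marg n \<psi> k y = (\<Sum>z\<in>labels (n - k). pauli_dist n \<psi> (y @ z))"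

definition tensor_pow :: "nat \<Rightarrow> nat \<Rightarrow> (bool list \<Rightarrow> complex) \<Rightarrow> bool list \<Rightarrow> complex" where
  "tensor_pow n M \<psi> bs = (\<Prod>j<M. \<psi> (take n (drop (j * n) bs)))"

definition qform :: "nat \<Rightarrow> (bool list \<Rightarrow> bool list \<Rightarrow> complex) \<Rightarrow> (bool list \<Rightarrow> complex) \<Rightarrow> complex" where
  "qform m A v = (\<Sum>a\<in>bitstrs m. \<Sum>b\<in>bitstrs m. cnj (v a) * A a b * v b)"

definition psd :: "nat \<Rightarrow> (bool list \<Rightarrow> bool list \<Rightarrow> complex) \<Rightarrow> bool" where
  "psd m A \<longleftrightarrow> (\<forall>v. qform m A v \<in> \<real> \<and> Re (qform m A v) \<ge> 0)"

definition povm :: "nat \<Rightarrow> nat set \<Rightarrow> (nat \<Rightarrow> bool list \<Rightarrow> bool list \<Rightarrow> complex) \<Rightarrow> bool" where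
  "povm m \<Omega> E \<longleftrightarrow> finite \<Omega> \<and> (\<forall>r\<in>\<Omega>. psd m (E r)) \<and>
     (\<forall>a\<in>bitstrs m. \<forall>b\<in>bitstrs m. (\<Sum>r\<in>\<Omega>. E r a b) = (if a = b then 1 else 0))"

definition outcome_prob :: "nat \<Rightarrow> (nat \<Rightarrow> bool list \<Rightarrow> bool list \<Rightarrow> complex) \<Rightarrow> nat \<Rightarrow> (bool list \<Rightarrow> complex) \<Rightarrow> real" where
  "outcome_prob m E r \<Phi> = Re (qform m (E r) \<Phi>)"

end

theory Submission
  imports Defs "HOL-Library.Countable"
begin

(*
  Measuring two copies of psi in the Bell basis returns c = v @ w with probability
  q(c) = |<Phi_(v,w)| psi (x) psi>|^2.  The operator P_Y (x) P_Y is diagonal in the Bell basis with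
  eigenvalues +-1, so the expected sign is tr(rho P_Y)^2 = 2^n p(Y); in coordinates this is the
  autocorrelation and convolution theorems of the Walsh-Hadamard transform.  Averaging the sign over
  the last n - k labels gives an observable with values +-1 and mean 2^k p(x_(1:k)).  With N samples,
  a Chernoff bound makes a deviation of more than epsilon in any fixed empirical mean
  exponentially unlikely in N epsilon^2, and a union bound over the fewer than n 4^n pairs (k, y)
  bounds the total failure probability by delta once N >= 80 n ln(1/delta) / epsilon^2.
*)

definition bxor :: "bool list \<Rightarrow> bool list \<Rightarrow> bool list" where
  "bxor a b = map2 (\<noteq>) a b"

lemma bdot_Nil [simp]: "bdot [] w = 0" "bdot v [] = 0"
  by (auto simp: bdot_def)

lemma bdot_Cons [simp]: "bdot (x # v) (y # w) = of_bool (x \<and> y) + bdot v w"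
  by (auto simp: bdot_def)

lemma bdot_commute: "bdot v w = bdot w v"
proof (induction v arbitrary: w)
  case (Cons x v)
  then show ?case by (cases w) auto
qed simp

lemma bdot_append: "length a = length c \<Longrightarrow> bdot (a @ b) (c @ d) = bdot a c + bdot b d"
  by (induction a c rule: list_induct2) auto

lemma bdot_replicate_False [simp]: "bdot w (replicate m False) = 0" "bdot (replicate m False) w = 0"
proof -
  show "bdot w (replicate m False) = 0"
  proof (induction m arbitrary: w)
    case (Suc m)
    then show ?case by (cases w) auto
  qed simp
  then show "bdot (replicate m False) w = 0" by (simp add: bdot_commute)
qed

lemma bxor_Nil [simp]: "bxor [] b = []" "bxor a [] = []"
  by (auto simp: bxor_def)

lemma bxor_Cons [simp]: "bxor (x # a) (y # b) = (x \<noteq> y) # bxor a b"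
  by (simp add: bxor_def)

lemma length_bxor [simp]: "length (bxor a b) = min (length a) (length b)"
  by (simp add: bxor_def)

lemma bxor_commute: "bxor a b = bxor b a"
  by (simp add: bxor_def zip_commute[of a b] map_zip_map2 split_def) (auto intro: map_cong)

lemma bxor_assoc: "bxor (bxor a b) c = bxor a (bxor b c)"
proof (induction a arbitrary: b c)
  case (Cons x a)
  then show ?case by (cases b; cases c) auto
qed simp

lemma bxor_bxor_cancel [simp]: "length a = length b \<Longrightarrow> bxor a (bxor a b) = b"
  by (induction a b rule: list_induct2) auto

lemma bxor_replicate_False [simp]: "length a = m \<Longrightarrow> bxor a (replicate m False) = a"
  by (induction a arbitrary: m) auto

lemma bxor_eq_replicate_False_iff:
  "length a = length b \<Longrightarrow> bxor a b = replicate (length a) False \<longleftrightarrow> a = b"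
  by (induction a b rule: list_induct2) auto

lemma sign_bdot_bxor:
  "length a = length b \<Longrightarrow>
     (-1 :: 'a :: comm_ring_1) ^ bdot w (bxor a b) = (-1) ^ bdot w a * (-1) ^ bdot w b"
proof (induction a b arbitrary: w rule: list_induct2)
  case (Cons x a y b)
  then show ?case by (cases w) (auto simp: power_add)
qed simp

lemma finite_bitstrs [simp]: "finite (bitstrs n)"
  using finite_lists_length_eq[of "UNIV :: bool set" n] by (simp add: bitstrs_def)

lemma finite_labels [simp]: "finite (labels n)"
  using finite_lists_length_eq[of "UNIV :: (bool \<times> bool) set" n] by (simp add: labels_def)

lemma card_labels: "card (labels n) = 4 ^ n"
proof -
  have "card (UNIV :: (bool \<times> bool) set) = 4"
    by (simp add: card_cartesian_product flip: UNIV_Times_UNIV)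
  then show ?thesis
    using card_lists_length_eq[of "UNIV :: (bool \<times> bool) set" n] by (simp add: labels_def)
qed

lemma bxor_in_bitstrs: "a \<in> bitstrs n \<Longrightarrow> b \<in> bitstrs n \<Longrightarrow> bxor a b \<in> bitstrs n"
  by (simp add: bitstrs_def)

lemma bitstrs_Suc: "bitstrs (Suc n) = (#) True ` bitstrs n \<union> (#) False ` bitstrs n"
proof -
  have "x \<in> (#) True ` bitstrs n \<union> (#) False ` bitstrs n" if "x \<in> bitstrs (Suc n)" for x
    using that by (cases x) (auto simp: bitstrs_def)
  then show ?thesis by (auto simp: bitstrs_def)
qed

lemma sum_sign_bdot:
  "c \<in> bitstrs n \<Longrightarrow>
     (\<Sum>w\<in>bitstrs n. (-1 :: 'a :: comm_ring_1) ^ bdot w c) = (if c = replicate n False then 2 ^ n else 0)"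
proof (induction n arbitrary: c)
  case 0
  then show ?case by (simp add: bitstrs_def)
next
  case (Suc n)
  then obtain c0 c' where c: "c = c0 # c'" "c' \<in> bitstrs n"
    by (cases c) (auto simp: bitstrs_def)
  have "(\<Sum>w\<in>bitstrs (Suc n). (-1 :: 'a) ^ bdot w c) =
        (\<Sum>w\<in>bitstrs n. (-1) ^ bdot (True # w) c) + (\<Sum>w\<in>bitstrs n. (-1) ^ bdot (False # w) c)"
    unfolding bitstrs_Suc by (subst sum.union_disjoint) (auto simp: sum.reindex)
  also have "\<dots> = ((if c0 then -1 else 1) + 1) * (\<Sum>w\<in>bitstrs n. (-1 :: 'a) ^ bdot w c')"
    by (simp add: c sum_distrib_left algebra_simps flip: sum.distrib)
  finally show ?case using Suc.IH[OF c(2)] c by auto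
qed

lemma sum_sign_orthogonal:
  assumes "a \<in> bitstrs n" "b \<in> bitstrs n"
  shows "(\<Sum>w\<in>bitstrs n. (-1 :: 'a :: comm_ring_1) ^ bdot w a * (-1) ^ bdot w b) =
           (if a = b then 2 ^ n else 0)"
proof -
  have len: "length a = n" "length b = n" using assms by (auto simp: bitstrs_def)
  have "(\<Sum>w\<in>bitstrs n. (-1 :: 'a) ^ bdot w a * (-1) ^ bdot w b) =
        (\<Sum>w\<in>bitstrs n. (-1) ^ bdot w (bxor a b))"
    using len by (simp add: sign_bdot_bxor)
  also have "\<dots> = (if a = b then 2 ^ n else 0)"
    using sum_sign_bdot[OF bxor_in_bitstrs[OF assms]] bxor_eq_replicate_False_iff[of a b] len
    by simp
  finally show ?thesis .
qed

lemma sum_bitstrs_bxor_reindex: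
  assumes "d \<in> bitstrs n"
  shows "(\<Sum>v\<in>bitstrs n. f v) = (\<Sum>b\<in>bitstrs n. f (bxor d b))"
  using assms by (intro sum.reindex_bij_witness[where i = "bxor d" and j = "bxor d"])
    (auto simp: bitstrs_def)

lemma sum_bitstrs_append:
  "(\<Sum>x\<in>bitstrs (L + K). f x) = (\<Sum>c\<in>bitstrs L. \<Sum>a\<in>bitstrs K. f (c @ a))"
proof -
  have "bij_betw (\<lambda>(c, a). c @ a) (bitstrs L \<times> bitstrs K) (bitstrs (L + K))"
    by (rule bij_betw_byWitness[where f' = "\<lambda>x. (take L x, drop L x)"]) (auto simp: bitstrs_def)
  then show ?thesis
    by (simp add: sum.reindex_bij_betw[symmetric] sum.cartesian_product split_def)
qed

lemma sum_bitstrs_double: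
  "(\<Sum>c\<in>bitstrs (2 * n). f c) = (\<Sum>v\<in>bitstrs n. \<Sum>w\<in>bitstrs n. f (v @ w))"
  unfolding mult_2 by (rule sum_bitstrs_append)

definition chunk :: "nat \<Rightarrow> nat \<Rightarrow> 'a list \<Rightarrow> 'a list" where
  "chunk L j a = take L (drop (j * L) a)"

lemma chunk_0_append: "length c = L \<Longrightarrow> chunk L 0 (c @ a) = c"
  by (simp add: chunk_def)

lemma chunk_Suc_append: "length c = L \<Longrightarrow> chunk L (Suc j) (c @ a) = chunk L j a"
  by (simp add: chunk_def add.commute)

lemma chunk_in_bitstrs: "a \<in> bitstrs (L * M) \<Longrightarrow> j < M \<Longrightarrow> chunk L j a \<in> bitstrs L"
proof -
  assume "a \<in> bitstrs (L * M)" "j < M"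
  moreover have "j * L + L \<le> L * M" using \<open>j < M\<close>
    by (metis add.commute mult.commute mult_le_mono1 Suc_leI mult_Suc)
  ultimately show ?thesis by (simp add: chunk_def bitstrs_def)
qed

lemma sum_prod_chunks:
  fixes f :: "nat \<Rightarrow> bool list \<Rightarrow> 'a :: comm_semiring_1"
  shows "(\<Sum>a\<in>bitstrs (L * M). \<Prod>j<M. f j (chunk L j a)) = (\<Prod>j<M. \<Sum>c\<in>bitstrs L. f j c)"
proof (induction M arbitrary: f)
  case 0
  then show ?case by (simp add: bitstrs_def)
next
  case (Suc M)
  have "(\<Sum>a\<in>bitstrs (L * Suc M). \<Prod>j<Suc M. f j (chunk L j a)) =
        (\<Sum>c\<in>bitstrs L. \<Sum>a\<in>bitstrs (L * M). f 0 c * (\<Prod>j<M. f (Suc j) (chunk L j a)))"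
    unfolding mult_Suc_right sum_bitstrs_append prod.lessThan_Suc_shift
    by (intro sum.cong refl) (simp add: chunk_0_append chunk_Suc_append bitstrs_def)
  also have "\<dots> = (\<Sum>c\<in>bitstrs L. f 0 c) * (\<Prod>j<M. \<Sum>c\<in>bitstrs L. f (Suc j) c)"
    by (simp add: sum_product[symmetric] Suc.IH[of "\<lambda>j. f (Suc j)"])
  finally show ?case by (simp only: prod.lessThan_Suc_shift)
qed

lemma bitstrs_eqI_chunks:
  "a \<in> bitstrs (L * M) \<Longrightarrow> b \<in> bitstrs (L * M) \<Longrightarrow> (\<And>j. j < M \<Longrightarrow> chunk L j a = chunk L j b) \<Longrightarrow> a = b"
proof (induction M arbitrary: a b)
  case 0
  then show ?case by (simp add: bitstrs_def)
next
  case (Suc M)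
  have len: "length (take L a) = L" "length (take L b) = L"
    using Suc.prems(1,2) by (auto simp: bitstrs_def)
  have "take L a = take L b"
    using Suc.prems(3)[of 0] by (simp add: chunk_def)
  moreover have "drop L a = drop L b"
  proof (rule Suc.IH)
    show "drop L a \<in> bitstrs (L * M)" "drop L b \<in> bitstrs (L * M)"
      using Suc.prems(1,2) by (auto simp: bitstrs_def)
    show "chunk L j (drop L a) = chunk L j (drop L b)" if "j < M" for j
      using Suc.prems(3)[of "Suc j"] that chunk_Suc_append[OF len(1), of j "drop L a"]
        chunk_Suc_append[OF len(2), of j "drop L b"]
      by simp
  qed
  ultimately show ?case by (metis append_take_drop_id)
qed

section \<open>Walsh-Hadamard transform\<close>

definition walsh :: "nat \<Rightarrow> (bool list \<Rightarrow> complex) \<Rightarrow> bool list \<Rightarrow> complex" where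
  "walsh n g w = (\<Sum>d\<in>bitstrs n. (-1) ^ bdot w d * g d)"

lemma walsh_inversion:
  assumes "x \<in> bitstrs n"
  shows "(\<Sum>w\<in>bitstrs n. (-1) ^ bdot w x * walsh n g w) = 2 ^ n * g x"
proof -
  have "(\<Sum>w\<in>bitstrs n. (-1) ^ bdot w x * walsh n g w) =
        (\<Sum>d\<in>bitstrs n. \<Sum>w\<in>bitstrs n. (-1) ^ bdot w x * (-1) ^ bdot w d * g d)"
    unfolding walsh_def sum_distrib_left by (subst sum.swap) (simp add: mult.assoc)
  also have "\<dots> = (\<Sum>d\<in>bitstrs n. if x = d then 2 ^ n * g d else 0)"
    using assms by (intro sum.cong refl) (simp add: sum_sign_orthogonal flip: sum_distrib_right)
  finally show ?thesis using assms by simp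
qed

lemma walsh_autocorrelation:
  assumes p: "p \<in> bitstrs n"
  shows "(\<Sum>w\<in>bitstrs n. walsh n g w * cnj (walsh n g w) * (-1) ^ bdot w p) =
           2 ^ n * (\<Sum>d\<in>bitstrs n. g d * cnj (g (bxor d p)))"
proof -
  have "(\<Sum>w\<in>bitstrs n. walsh n g w * cnj (walsh n g w) * (-1) ^ bdot w p) =
        (\<Sum>d\<in>bitstrs n. \<Sum>w\<in>bitstrs n. g d * ((-1) ^ bdot w d * (-1) ^ bdot w p * cnj (walsh n g w)))"
    unfolding walsh_def[of n g] sum_distrib_right by (subst sum.swap) (simp add: ac_simps)
  also have "\<dots> = (\<Sum>d\<in>bitstrs n. g d * cnj (\<Sum>w\<in>bitstrs n. (-1) ^ bdot w (bxor d p) * walsh n g w))"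
    using p by (intro sum.cong refl) (simp add: sum_distrib_left sign_bdot_bxor bitstrs_def)
  also have "\<dots> = (\<Sum>d\<in>bitstrs n. g d * cnj (2 ^ n * g (bxor d p)))"
    using p by (intro sum.cong refl) (simp add: walsh_inversion bxor_in_bitstrs)
  finally show ?thesis by (simp add: sum_distrib_left ac_simps)
qed

lemma walsh_convolution:
  assumes q: "q \<in> bitstrs n"
  shows "walsh n (\<lambda>v. \<Sum>d\<in>bitstrs n. f (bxor d v) * g d) q = walsh n f q * walsh n g q"
proof -
  have "walsh n (\<lambda>v. \<Sum>d\<in>bitstrs n. f (bxor d v) * g d) q =
        (\<Sum>d\<in>bitstrs n. g d * (\<Sum>v\<in>bitstrs n. (-1) ^ bdot q v * f (bxor d v)))"
    unfolding walsh_def sum_distrib_left by (subst sum.swap) (simp add: ac_simps)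
  also have "\<dots> = (\<Sum>d\<in>bitstrs n. g d * (\<Sum>e\<in>bitstrs n. (-1) ^ bdot q (bxor d e) * f e))"
  proof (rule sum.cong[OF refl])
    fix d assume "d \<in> bitstrs n"
    then have "(\<Sum>v\<in>bitstrs n. (-1) ^ bdot q v * f (bxor d v)) =
               (\<Sum>e\<in>bitstrs n. (-1) ^ bdot q (bxor d e) * f e)"
      by (subst sum_bitstrs_bxor_reindex[of d]) (auto simp: bitstrs_def intro!: sum.cong)
    then show "g d * (\<Sum>v\<in>bitstrs n. (-1) ^ bdot q v * f (bxor d v)) =
               g d * (\<Sum>e\<in>bitstrs n. (-1) ^ bdot q (bxor d e) * f e)"
      by simp
  qed
  also have "\<dots> = (\<Sum>d\<in>bitstrs n. (-1) ^ bdot q d * g d * walsh n f q)"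
    by (intro sum.cong refl) (auto simp: walsh_def sign_bdot_bxor sum_distrib_left bitstrs_def ac_simps)
  also have "\<dots> = walsh n g q * walsh n f q"
    unfolding walsh_def[of n g] sum_distrib_right ..
  finally show ?thesis by (simp only: mult.commute)
qed

definition rank_one_povm ::
    "(bool list \<Rightarrow> bool list \<Rightarrow> complex) \<Rightarrow> nat \<Rightarrow> bool list \<Rightarrow> bool list \<Rightarrow> complex" where
  "rank_one_povm e r = (\<lambda>a b. e (from_nat r) a * cnj (e (from_nat r) b))"

lemma qform_rank_one:
  "qform m (\<lambda>a b. u a * cnj (u b)) x = of_real ((cmod (\<Sum>b\<in>bitstrs m. cnj (u b) * x b))\<^sup>2)"
proof -
  have "qform m (\<lambda>a b. u a * cnj (u b)) x =
        (\<Sum>b\<in>bitstrs m. cnj (u b) * x b) * cnj (\<Sum>b\<in>bitstrs m. cnj (u b) * x b)"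
    unfolding qform_def cnj_sum sum_product by (subst sum.swap) (simp add: ac_simps)
  then show ?thesis by (simp only: complex_norm_square)
qed

lemma povm_rank_one:
  assumes "finite S"
    and complete: "\<And>a b. a \<in> bitstrs m \<Longrightarrow> b \<in> bitstrs m \<Longrightarrow>
                      (\<Sum>s\<in>S. e s a * cnj (e s b)) = (if a = b then 1 else 0)"
  shows "povm m (to_nat ` S) (rank_one_povm e)"
  unfolding povm_def
proof (intro conjI ballI)
  show "finite (to_nat ` S)" using \<open>finite S\<close> by simp
  show "psd m (rank_one_povm e r)" for r
    by (simp add: psd_def rank_one_povm_def qform_rank_one)
  fix a b assume "a \<in> bitstrs m" "b \<in> bitstrs m"
  then show "(\<Sum>r\<in>to_nat ` S. rank_one_povm e r a b) = (if a = b then 1 else 0)"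
    by (simp add: sum.reindex inj_on_def rank_one_povm_def complete)
qed

lemma outcome_prob_rank_one:
  "outcome_prob m (rank_one_povm e) (to_nat s) \<Phi> = (cmod (\<Sum>b\<in>bitstrs m. cnj (e s b) * \<Phi> b))\<^sup>2"
  by (simp add: outcome_prob_def rank_one_povm_def qform_rank_one)

definition tensor_family ::
    "nat \<Rightarrow> nat \<Rightarrow> (bool list \<Rightarrow> bool list \<Rightarrow> complex) \<Rightarrow> bool list \<Rightarrow> bool list \<Rightarrow> complex" where
  "tensor_family L M e s a = (\<Prod>j<M. e (chunk L j s) (chunk L j a))"

lemma tensor_family_complete:
  assumes complete: "\<And>a b. a \<in> bitstrs L \<Longrightarrow> b \<in> bitstrs L \<Longrightarrow>
                      (\<Sum>c\<in>bitstrs L. e c a * cnj (e c b)) = (if a = b then 1 else 0)"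
    and a: "a \<in> bitstrs (L * M)" and b: "b \<in> bitstrs (L * M)"
  shows "(\<Sum>s\<in>bitstrs (L * M). tensor_family L M e s a * cnj (tensor_family L M e s b)) =
           (if a = b then 1 else 0)"
proof -
  have "(\<Sum>s\<in>bitstrs (L * M). tensor_family L M e s a * cnj (tensor_family L M e s b)) =
        (\<Prod>j<M. \<Sum>c\<in>bitstrs L. e c (chunk L j a) * cnj (e c (chunk L j b)))"
    by (simp add: tensor_family_def flip: prod.distrib sum_prod_chunks)
  also have "\<dots> = (\<Prod>j<M. if chunk L j a = chunk L j b then 1 else 0)"
    using a b by (intro prod.cong refl complete) (auto intro: chunk_in_bitstrs)
  also have "\<dots> = (if a = b then 1 else 0)"
    using bitstrs_eqI_chunks[OF a b] by (auto simp: prod.neutral)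
  finally show ?thesis .
qed

lemma tensor_family_amplitude:
  "(\<Sum>a\<in>bitstrs (L * M). cnj (tensor_family L M e s a) * (\<Prod>j<M. \<phi> (chunk L j a))) =
     (\<Prod>j<M. \<Sum>c\<in>bitstrs L. cnj (e (chunk L j s) c) * \<phi> c)"
  by (simp add: tensor_family_def flip: prod.distrib sum_prod_chunks)

section \<open>Bell sampling\<close>

(* Component at x @ y of the Bell state Phi_(v,w) = 2^(-n/2) sum_d (-1)^(w.d) |d xor v> |d>,
   indexed by the outcome c = v @ w. *)
definition bell_vec :: "nat \<Rightarrow> bool list \<Rightarrow> bool list \<Rightarrow> complex" where
  "bell_vec n c a =
     (if take n a = bxor (drop n a) (take n c) then (-1) ^ bdot (drop n c) (drop n a) else 0) /
     of_real (sqrt (2 ^ n))"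

definition bell_amp :: "nat \<Rightarrow> (bool list \<Rightarrow> complex) \<Rightarrow> bool list \<Rightarrow> bool list \<Rightarrow> complex" where
  "bell_amp n \<psi> v = walsh n (\<lambda>d. \<psi> (bxor d v) * \<psi> d)"

lemma bitstrs_double_cases:
  assumes "a \<in> bitstrs (2 * n)"
  obtains x y where "a = x @ y" "x \<in> bitstrs n" "y \<in> bitstrs n"
proof
  show "a = take n a @ drop n a" by simp
qed (use assms in \<open>auto simp: bitstrs_def\<close>)

lemma bell_vec_append:
  assumes "length v = n" "length x = n" "length y = n"
  shows "bell_vec n (v @ w) (x @ y) =
           (if x = bxor y v then (-1) ^ bdot w y else 0) / of_real (sqrt (2 ^ n))"
  using assms by (simp add: bell_vec_def)

lemma bell_vec_complete:
  assumes "a \<in> bitstrs (2 * n)" "b \<in> bitstrs (2 * n)"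
  shows "(\<Sum>c\<in>bitstrs (2 * n). bell_vec n c a * cnj (bell_vec n c b)) = (if a = b then 1 else 0)"
proof -
  obtain x y x' y' where ab: "a = x @ y" "b = x' @ y'"
    and in_bitstrs: "x \<in> bitstrs n" "y \<in> bitstrs n" "x' \<in> bitstrs n" "y' \<in> bitstrs n"
    using assms by (elim bitstrs_double_cases)
  have norm: "of_real (sqrt (2 ^ n)) * cnj (of_real (sqrt (2 ^ n))) = (2 ^ n :: complex)"
  proof -
    have "sqrt (2 ^ n) * sqrt (2 ^ n) = (2 ^ n :: real)" by simp
    then show ?thesis by (metis complex_cnj_complex_of_real of_real_mult of_real_numeral of_real_power)
  qed
  have summand: "bell_vec n (v @ w) a * cnj (bell_vec n (v @ w) b) =
        (if x = bxor y v \<and> x' = bxor y' v then (-1) ^ bdot w y * (-1) ^ bdot w y' / 2 ^ n else 0)"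
    if "v \<in> bitstrs n" for v w
    using that in_bitstrs by (simp add: ab bell_vec_append bitstrs_def flip: norm)
  have "(\<Sum>c\<in>bitstrs (2 * n). bell_vec n c a * cnj (bell_vec n c b)) =
        (\<Sum>v\<in>bitstrs n. if x = bxor y v \<and> x' = bxor y' v then
           (\<Sum>w\<in>bitstrs n. (-1) ^ bdot w y * (-1) ^ bdot w y') / 2 ^ n else 0)"
    unfolding sum_bitstrs_double[where n = n]
    by (intro sum.cong refl) (auto simp: summand sum_divide_distrib)
  also have "\<dots> = (\<Sum>v\<in>bitstrs n. if x = bxor y v \<and> x' = bxor y' v \<and> y = y' then 1 else 0)"
    using in_bitstrs by (intro sum.cong refl) (subst sum_sign_orthogonal, auto)
  also have "\<dots> = (\<Sum>v\<in>bitstrs n. if v = bxor y x \<and> x = x' \<and> y = y' then 1 else 0)"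
    using in_bitstrs by (intro sum.cong refl) (auto simp: bitstrs_def)
  also have "\<dots> = (if x = x' \<and> y = y' then 1 else 0)"
    using bxor_in_bitstrs[OF in_bitstrs(2,1)] by (cases "x = x' \<and> y = y'") (auto intro: sum.neutral)
  also have "\<dots> = (if a = b then 1 else 0)"
    using in_bitstrs by (auto simp: ab bitstrs_def)
  finally show ?thesis .
qed

lemma bell_vec_amplitude:
  assumes c: "c \<in> bitstrs (2 * n)"
  shows "(\<Sum>a\<in>bitstrs (2 * n). cnj (bell_vec n c a) * (\<psi> (take n a) * \<psi> (drop n a))) =
           bell_amp n \<psi> (take n c) (drop n c) / of_real (sqrt (2 ^ n))"
proof -
  have v: "take n c \<in> bitstrs n" using c by (simp add: bitstrs_def)
  have "(\<Sum>a\<in>bitstrs (2 * n). cnj (bell_vec n c a) * (\<psi> (take n a) * \<psi> (drop n a))) =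
        (\<Sum>d\<in>bitstrs n. \<Sum>x\<in>bitstrs n. if x = bxor d (take n c) then
           (-1) ^ bdot (drop n c) d * \<psi> x * \<psi> d / of_real (sqrt (2 ^ n)) else 0)"
    unfolding sum_bitstrs_double[where n = n]
    by (subst sum.swap) (auto simp: bell_vec_def bitstrs_def intro!: sum.cong)
  also have "\<dots> = bell_amp n \<psi> (take n c) (drop n c) / of_real (sqrt (2 ^ n))"
    using bxor_in_bitstrs[OF _ v]
    by (simp add: bell_amp_def walsh_def sum_divide_distrib bdot_commute ac_simps)
  finally show ?thesis .
qed

definition bell_dist :: "nat \<Rightarrow> (bool list \<Rightarrow> complex) \<Rightarrow> bool list \<Rightarrow> real" where
  "bell_dist n \<psi> c = (cmod (bell_amp n \<psi> (take n c) (drop n c)))\<^sup>2 / 2 ^ n"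

(* The eigenvalue of P_Y (x) P_Y on the Bell state Phi_(v,w). *)
definition bell_sign :: "(bool \<times> bool) list \<Rightarrow> bool list \<Rightarrow> bool list \<Rightarrow> real" where
  "bell_sign Y v w = (-1) ^ (bdot w (map fst Y) + bdot v (map snd Y) + bdot (map fst Y) (map snd Y))"

lemma pauli_expect_walsh:
  "pauli_expect n \<psi> Y =
     \<i> ^ bdot (map fst Y) (map snd Y) * walsh n (\<lambda>d. \<psi> d * cnj (\<psi> (bxor d (map fst Y)))) (map snd Y)"
  by (simp add: pauli_expect_def walsh_def bxor_def Let_def ac_simps)

lemma bell_sign_expectation:
  assumes "Y \<in> labels n"
  shows "(\<Sum>c\<in>bitstrs (2 * n). bell_dist n \<psi> c * bell_sign Y (take n c) (drop n c)) =
           2 ^ n * pauli_dist n \<psi> Y"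
proof -
  define p q where "p = map fst Y" and "q = map snd Y"
  have pq: "p \<in> bitstrs n" "q \<in> bitstrs n" using assms by (auto simp: p_def q_def labels_def bitstrs_def)
  define F where "F d = \<psi> d * cnj (\<psi> (bxor d p))" for d
  have autocorr: "(\<Sum>w\<in>bitstrs n. of_real ((cmod (bell_amp n \<psi> v w))\<^sup>2) * (-1) ^ bdot w p) =
                  2 ^ n * (\<Sum>d\<in>bitstrs n. F (bxor d v) * F d)" if v: "v \<in> bitstrs n" for v
  proof -
    have "bxor (bxor d p) v = bxor (bxor d v) p" for d
      by (metis bxor_assoc bxor_commute)
    then show ?thesis
      using walsh_autocorrelation[OF pq(1), of "\<lambda>d. \<psi> (bxor d v) * \<psi> d"]
      unfolding complex_norm_square bell_amp_def by (simp add: F_def ac_simps)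
  qed
  have "complex_of_real (\<Sum>c\<in>bitstrs (2 * n). bell_dist n \<psi> c * bell_sign Y (take n c) (drop n c)) =
        (-1) ^ bdot p q / 2 ^ n * (\<Sum>v\<in>bitstrs n. (-1) ^ bdot q v *
          (\<Sum>w\<in>bitstrs n. of_real ((cmod (bell_amp n \<psi> v w))\<^sup>2) * (-1) ^ bdot w p))"
    unfolding sum_bitstrs_double[where n = n] of_real_sum sum_distrib_left
    by (intro sum.cong refl) (auto simp: bell_dist_def bell_sign_def p_def q_def bitstrs_def
        power_add bdot_commute[of _ "map snd Y"] ac_simps)
  also have "\<dots> = (-1) ^ bdot p q / 2 ^ n *
        (\<Sum>v\<in>bitstrs n. (-1) ^ bdot q v * (2 ^ n * (\<Sum>d\<in>bitstrs n. F (bxor d v) * F d)))"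
    by (intro arg_cong[where f = "times _"] sum.cong refl) (simp only: autocorr)
  also have "\<dots> = (-1) ^ bdot p q * walsh n (\<lambda>v. \<Sum>d\<in>bitstrs n. F (bxor d v) * F d) q"
    by (simp add: walsh_def sum_distrib_left)
  also have "\<dots> = (-1) ^ bdot p q * walsh n F q ^ 2"
    unfolding walsh_convolution[OF pq(2)] by (simp add: power2_eq_square)
  also have "\<dots> = pauli_expect n \<psi> Y ^ 2"
  proof -
    have "(\<i> ^ k)\<^sup>2 = (-1 :: complex) ^ k" for k
      by (simp add: mult.commute[of k] flip: power_mult)
    then show ?thesis
      by (simp add: pauli_expect_walsh power_mult_distrib F_def[abs_def] p_def q_def)
  qed
  finally have "Re (pauli_expect n \<psi> Y ^ 2) =
      (\<Sum>c\<in>bitstrs (2 * n). bell_dist n \<psi> c * bell_sign Y (take n c) (drop n c))"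
    by (metis Re_complex_of_real)
  then show ?thesis by (simp add: pauli_dist_def)
qed

lemma bell_dist_nonneg: "0 \<le> bell_dist n \<psi> c"
  by (simp add: bell_dist_def)

lemma sum_bell_dist:
  assumes "pure_state n \<psi>"
  shows "(\<Sum>c\<in>bitstrs (2 * n). bell_dist n \<psi> c) = 1"
proof -
  define Y where "Y = replicate n (False, False)"
  have Y: "Y \<in> labels n" "map fst Y = replicate n False" "map snd Y = replicate n False"
    by (simp_all add: Y_def labels_def)
  have "map2 (\<noteq>) b (replicate n False) = b" if "b \<in> bitstrs n" for b
    using that bxor_replicate_False[of b n] by (simp add: bitstrs_def bxor_def)
  then have "pauli_expect n \<psi> Y = (\<Sum>b\<in>bitstrs n. of_real ((cmod (\<psi> b))\<^sup>2))"
    unfolding pauli_expect_def Let_def Y(2,3) complex_norm_square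
    by (simp add: mult.commute cong: sum.cong)
  also have "\<dots> = 1"
    using assms by (simp add: pure_state_def flip: of_real_sum of_real_power)
  finally have "pauli_dist n \<psi> Y = 1 / 2 ^ n"
    by (simp add: pauli_dist_def)
  then show ?thesis
    using bell_sign_expectation[OF Y(1), of \<psi>] by (simp add: bell_sign_def Y(2,3))
qed

lemma sum_labels_zip:
  "(\<Sum>z\<in>labels m. f z) = (\<Sum>a\<in>bitstrs m. \<Sum>b\<in>bitstrs m. f (zip a b))"
proof -
  have "bij_betw (\<lambda>(a, b). zip a b) (bitstrs m \<times> bitstrs m) (labels m)"
    by (rule bij_betw_byWitness[where f' = "\<lambda>z. (map fst z, map snd z)"])
      (auto simp: bitstrs_def labels_def zip_map_fst_snd)
  then show ?thesis
    by (simp add: sum.reindex_bij_betw[symmetric] sum.cartesian_product split_def)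
qed

lemma sum_bell_sign:
  assumes "v \<in> bitstrs m" "w \<in> bitstrs m"
  shows "(\<Sum>z\<in>labels m. bell_sign z v w) = 2 ^ m * (-1) ^ bdot w v"
proof -
  have "(\<Sum>z\<in>labels m. bell_sign z v w) =
        (\<Sum>a\<in>bitstrs m. (-1) ^ bdot w a * (\<Sum>b\<in>bitstrs m. (-1) ^ bdot b v * (-1) ^ bdot b a))"
    unfolding sum_labels_zip sum_distrib_left
    by (intro sum.cong refl) (auto simp: bell_sign_def bitstrs_def power_add bdot_commute ac_simps)
  also have "\<dots> = (\<Sum>a\<in>bitstrs m. if v = a then 2 ^ m * (-1) ^ bdot w a else 0)"
    using assms by (intro sum.cong refl) (simp add: sum_sign_orthogonal)
  finally show ?thesis using assms by simp
qed

lemma bell_sign_append: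
  assumes "length y = length v" "length y = length w"
  shows "bell_sign (y @ z) (v @ v') (w @ w') = bell_sign y v w * bell_sign z v' w'"
  using assms by (simp add: bell_sign_def bdot_append power_add)

definition marg_obs :: "nat \<Rightarrow> nat \<Rightarrow> (bool \<times> bool) list \<Rightarrow> bool list \<Rightarrow> real" where
  "marg_obs n k y c = (\<Sum>z\<in>labels (n - k). bell_sign (y @ z) (take n c) (drop n c)) / 2 ^ (n - k)"

lemma abs_marg_obs:
  assumes "k \<le> n" "y \<in> labels k" "c \<in> bitstrs (2 * n)"
  shows "\<bar>marg_obs n k y c\<bar> = 1"
proof -
  define v w where "v = take n c" and "w = drop n c"
  have vw: "length v = n" "length w = n" "length y = k"
    using assms by (auto simp: v_def w_def bitstrs_def labels_def)
  have split: "bell_sign (y @ z) v w =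
               bell_sign y (take k v) (take k w) * bell_sign z (drop k v) (drop k w)" for z
    using bell_sign_append[of y "take k v" "take k w" z "drop k v" "drop k w"] vw assms(1)
    by simp
  have "marg_obs n k y c = bell_sign y (take k v) (take k w) * (-1) ^ bdot (drop k w) (drop k v)"
    unfolding marg_obs_def v_def[symmetric] w_def[symmetric] split sum_distrib_left[symmetric]
    by (subst sum_bell_sign) (use vw in \<open>auto simp: bitstrs_def\<close>)
  then show ?thesis by (simp add: bell_sign_def abs_mult)
qed

lemma marg_obs_expectation:
  assumes "k \<le> n" "y \<in> labels k"
  shows "(\<Sum>c\<in>bitstrs (2 * n). bell_dist n \<psi> c * marg_obs n k y c) = 2 ^ k * pauli_marg n \<psi> k y"
proof -
  have yz: "y @ z \<in> labels n" if "z \<in> labels (n - k)" for z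
    using that assms by (auto simp: labels_def)
  have "(\<Sum>c\<in>bitstrs (2 * n). bell_dist n \<psi> c * marg_obs n k y c) =
        (\<Sum>z\<in>labels (n - k). \<Sum>c\<in>bitstrs (2 * n).
           bell_dist n \<psi> c * bell_sign (y @ z) (take n c) (drop n c)) / 2 ^ (n - k)"
    unfolding marg_obs_def sum_distrib_left sum_divide_distrib by (subst sum.swap) simp
  also have "\<dots> = (\<Sum>z\<in>labels (n - k). 2 ^ n * pauli_dist n \<psi> (y @ z)) / 2 ^ (n - k)"
    by (simp add: bell_sign_expectation yz)
  also have "\<dots> = 2 ^ k * pauli_marg n \<psi> k y"
  proof -
    have "(2 :: real) ^ n = 2 ^ k * 2 ^ (n - k)" using assms(1) by (simp flip: power_add)
    then show ?thesis by (simp add: pauli_marg_def sum_distrib_left sum_divide_distrib)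
  qed
  finally show ?thesis .
qed

section \<open>Concentration\<close>

lemma sum_Un_le:
  fixes w :: "'a \<Rightarrow> 'b :: ordered_ab_group_add"
  assumes "finite A" "finite B" "\<And>x. x \<in> A \<inter> B \<Longrightarrow> 0 \<le> w x"
  shows "sum w (A \<union> B) \<le> sum w A + sum w B"
  using sum_Un[OF assms(1,2), of w] sum_nonneg[of "A \<inter> B" w] assms(3) by simp

lemma sum_UN_le:
  fixes w :: "'a \<Rightarrow> 'b :: ordered_ab_group_add"
  assumes "finite I" "\<And>i. i \<in> I \<Longrightarrow> finite (B i)" "\<And>x. 0 \<le> w x"
  shows "sum w (\<Union>i\<in>I. B i) \<le> (\<Sum>i\<in>I. sum w (B i))"
  using assms
proof (induction I rule: finite_induct)
  case (insert i I)
  have "sum w (\<Union>j\<in>insert i I. B j) \<le> sum w (B i) + sum w (\<Union>j\<in>I. B j)"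
    using insert.hyps(1) insert.prems by (simp add: sum_Un_le)
  also have "\<dots> \<le> sum w (B i) + (\<Sum>j\<in>I. sum w (B j))"
    using insert.IH insert.prems by simp
  finally show ?case using insert.hyps by simp
qed simp

lemma exp_le_quadratic:
  fixes x :: real
  assumes "\<bar>x\<bar> \<le> 1"
  shows "exp x \<le> 1 + x + x\<^sup>2"
proof (cases "0 \<le> x")
  case True
  then show ?thesis using exp_bound[of x] assms by simp
next
  case False
  have "1 - x \<le> exp (- x)" using exp_ge_add_one_self[of "- x"] by simp
  then have "exp x \<le> 1 / (1 - x)"
    using False by (simp add: exp_minus field_simps)
  also have "\<dots> \<le> 1 + x + x\<^sup>2"
  proof -
    have "(1 - x) * (1 + x + x\<^sup>2) = 1 - x ^ 3"
      by (simp add: algebra_simps power2_eq_square power3_eq_cube)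
    moreover have "x ^ 3 \<le> 0" using False by (simp add: power_le_zero_eq)
    ultimately have "1 \<le> (1 - x) * (1 + x + x\<^sup>2)" by simp
    then show ?thesis using False by (simp add: field_simps)
  qed
  finally show ?thesis .
qed

lemma abs_weighted_mean_le_1:
  fixes Q f :: "'a \<Rightarrow> real"
  assumes Q: "\<And>c. c \<in> A \<Longrightarrow> 0 \<le> Q c" "(\<Sum>c\<in>A. Q c) = 1"
    and f: "\<And>c. c \<in> A \<Longrightarrow> \<bar>f c\<bar> \<le> 1"
  shows "\<bar>\<Sum>c\<in>A. Q c * f c\<bar> \<le> 1"
proof -
  have "\<bar>\<Sum>c\<in>A. Q c * f c\<bar> \<le> (\<Sum>c\<in>A. Q c)"
    using Q f by (intro order_trans[OF sum_abs] sum_mono) (auto simp: abs_mult intro: mult_left_le)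
  then show ?thesis using Q(2) by simp
qed

lemma mgf_le_exp_square:
  fixes Q f :: "'a \<Rightarrow> real"
  assumes Q: "\<And>c. c \<in> A \<Longrightarrow> 0 \<le> Q c" "(\<Sum>c\<in>A. Q c) = 1"
    and f: "\<And>c. c \<in> A \<Longrightarrow> \<bar>f c\<bar> \<le> 1"
    and l: "0 \<le> l" "l \<le> 1 / 2"
    and \<mu>: "\<mu> = (\<Sum>c\<in>A. Q c * f c)"
  shows "(\<Sum>c\<in>A. Q c * exp (l * (f c - \<mu>))) \<le> exp (4 * l\<^sup>2)"
proof -
  have "\<bar>\<mu>\<bar> \<le> 1"
    unfolding \<mu> by (rule abs_weighted_mean_le_1) (use Q f in auto)
  then have dev: "\<bar>f c - \<mu>\<bar> \<le> 2" if "c \<in> A" for c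
    using f[OF that] by linarith
  have "exp (l * (f c - \<mu>)) \<le> 1 + l * (f c - \<mu>) + 4 * l\<^sup>2" if "c \<in> A" for c
  proof -
    have "\<bar>l * (f c - \<mu>)\<bar> \<le> 1 / 2 * 2"
      unfolding abs_mult using l dev[OF that] by (intro mult_mono) auto
    moreover have "(l * (f c - \<mu>))\<^sup>2 \<le> l\<^sup>2 * 2\<^sup>2"
      unfolding power_mult_distrib using dev[OF that] abs_le_square_iff[of "f c - \<mu>" 2]
      by (intro mult_left_mono) auto
    ultimately show ?thesis using exp_le_quadratic[of "l * (f c - \<mu>)"] by simp
  qed
  then have "(\<Sum>c\<in>A. Q c * exp (l * (f c - \<mu>))) \<le> (\<Sum>c\<in>A. Q c * (1 + l * (f c - \<mu>) + 4 * l\<^sup>2))"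
    using Q by (intro sum_mono mult_left_mono) auto
  also have "\<dots> = (\<Sum>c\<in>A. Q c) * (1 - l * \<mu> + 4 * l\<^sup>2) + l * (\<Sum>c\<in>A. Q c * f c)"
    by (simp add: algebra_simps sum.distrib sum_subtractf sum_distrib_left sum_distrib_right)
  also have "\<dots> = 1 + 4 * l\<^sup>2"
    using Q(2) \<mu> by simp
  also have "\<dots> \<le> exp (4 * l\<^sup>2)"
    by (rule exp_ge_add_one_self[simplified add.commute])
  finally show ?thesis .
qed

lemma chernoff_upper:
  fixes Q f :: "bool list \<Rightarrow> real"
  assumes Q: "\<And>c. c \<in> bitstrs L \<Longrightarrow> 0 \<le> Q c" "(\<Sum>c\<in>bitstrs L. Q c) = 1"
    and f: "\<And>c. c \<in> bitstrs L \<Longrightarrow> \<bar>f c\<bar> \<le> 1"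
    and \<epsilon>: "0 < \<epsilon>" "\<epsilon> \<le> 2"
    and \<mu>: "\<mu> = (\<Sum>c\<in>bitstrs L. Q c * f c)"
  shows "(\<Sum>s\<in>{s\<in>bitstrs (L * N). real N * (\<mu> + \<epsilon>) < (\<Sum>j<N. f (chunk L j s))}.
            \<Prod>j<N. Q (chunk L j s)) \<le> exp (- (real N * \<epsilon>\<^sup>2 / 16))"
proof -
  define l where "l = \<epsilon> / 8"
  define g where "g c = Q c * exp (l * (f c - \<mu>))" for c
  have g_nonneg: "0 \<le> g c" if "c \<in> bitstrs L" for c
    using Q(1)[OF that] by (simp add: g_def)
  have markov: "(\<Prod>j<N. Q (chunk L j s)) \<le> exp (- (l * N * \<epsilon>)) * (\<Prod>j<N. g (chunk L j s))"
    if s: "s \<in> bitstrs (L * N)" and large: "real N * (\<mu> + \<epsilon>) < (\<Sum>j<N. f (chunk L j s))" for s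
  proof -
    have "l * ((\<Sum>j<N. f (chunk L j s)) - real N * (\<mu> + \<epsilon>)) =
          - (l * N * \<epsilon>) + (\<Sum>j<N. l * (f (chunk L j s) - \<mu>))"
      by (simp add: algebra_simps sum_subtractf sum_distrib_left)
    then have "exp (l * ((\<Sum>j<N. f (chunk L j s)) - real N * (\<mu> + \<epsilon>))) =
          exp (- (l * N * \<epsilon>)) * (\<Prod>j<N. exp (l * (f (chunk L j s) - \<mu>)))"
      by (simp only: exp_add exp_sum finite_lessThan)
    then have "exp (- (l * N * \<epsilon>)) * (\<Prod>j<N. g (chunk L j s)) =
          exp (l * ((\<Sum>j<N. f (chunk L j s)) - real N * (\<mu> + \<epsilon>))) * (\<Prod>j<N. Q (chunk L j s))"
      by (simp add: g_def prod.distrib ac_simps)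
    moreover have "1 \<le> exp (l * ((\<Sum>j<N. f (chunk L j s)) - real N * (\<mu> + \<epsilon>)))"
      using large \<epsilon> by (simp add: l_def)
    moreover have "0 \<le> (\<Prod>j<N. Q (chunk L j s))"
      using Q(1) chunk_in_bitstrs[OF s] by (intro prod_nonneg) simp
    ultimately show ?thesis by (metis mult_1 mult_right_mono)
  qed
  have "(\<Sum>s\<in>{s\<in>bitstrs (L * N). real N * (\<mu> + \<epsilon>) < (\<Sum>j<N. f (chunk L j s))}.
            \<Prod>j<N. Q (chunk L j s)) \<le>
        (\<Sum>s\<in>bitstrs (L * N). exp (- (l * N * \<epsilon>)) * (\<Prod>j<N. g (chunk L j s)))"
    using g_nonneg chunk_in_bitstrs
    by (intro order_trans[OF sum_mono sum_mono2]) (auto intro!: markov mult_nonneg_nonneg prod_nonneg)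
  also have "\<dots> = exp (- (l * N * \<epsilon>)) * (\<Sum>c\<in>bitstrs L. g c) ^ N"
    by (simp add: sum_prod_chunks[of "\<lambda>_. g"] flip: sum_distrib_left)
  also have "\<dots> \<le> exp (- (l * N * \<epsilon>)) * exp (4 * l\<^sup>2) ^ N"
    unfolding g_def using \<epsilon> g_nonneg
    by (intro mult_left_mono power_mono mgf_le_exp_square[OF Q f _ _ \<mu>])
      (auto simp: l_def g_def intro: sum_nonneg)
  also have "\<dots> = exp (- (real N * \<epsilon>\<^sup>2 / 16))"
    by (simp add: l_def power2_eq_square field_simps flip: exp_of_nat_mult exp_add)
  finally show ?thesis .
qed

lemma chernoff_two_sided:
  fixes Q f :: "bool list \<Rightarrow> real"
  assumes Q: "\<And>c. c \<in> bitstrs L \<Longrightarrow> 0 \<le> Q c" "(\<Sum>c\<in>bitstrs L. Q c) = 1"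
    and f: "\<And>c. c \<in> bitstrs L \<Longrightarrow> \<bar>f c\<bar> \<le> 1"
    and \<epsilon>: "0 < \<epsilon>"
    and \<mu>: "\<mu> = (\<Sum>c\<in>bitstrs L. Q c * f c)"
  shows "(\<Sum>s\<in>{s\<in>bitstrs (L * N). real N * \<epsilon> < \<bar>(\<Sum>j<N. f (chunk L j s)) - real N * \<mu>\<bar>}.
            \<Prod>j<N. Q (chunk L j s)) \<le> 2 * exp (- (real N * \<epsilon>\<^sup>2 / 16))"
    (is "sum ?W ?E \<le> _")
proof (cases "\<epsilon> \<le> 2")
  case True
  define E1 where "E1 = {s\<in>bitstrs (L * N). real N * (\<mu> + \<epsilon>) < (\<Sum>j<N. f (chunk L j s))}"
  define E2 where "E2 = {s\<in>bitstrs (L * N). real N * (- \<mu> + \<epsilon>) < (\<Sum>j<N. - f (chunk L j s))}"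
  have W_nonneg: "0 \<le> ?W s" if "s \<in> bitstrs (L * N)" for s
    using Q(1) chunk_in_bitstrs[OF that] by (intro prod_nonneg) simp
  have "sum ?W ?E \<le> sum ?W (E1 \<union> E2)"
    using W_nonneg by (intro sum_mono2) (auto simp: E1_def E2_def sum_negf algebra_simps abs_if)
  also have "\<dots> \<le> sum ?W E1 + sum ?W E2"
    using W_nonneg by (intro sum_Un_le) (auto simp: E1_def E2_def)
  also have "\<dots> \<le> exp (- (real N * \<epsilon>\<^sup>2 / 16)) + exp (- (real N * \<epsilon>\<^sup>2 / 16))"
    unfolding E1_def E2_def using \<epsilon> True f
    by (intro add_mono chernoff_upper[OF Q]) (auto simp: \<mu> sum_negf)
  finally show ?thesis by simp
next
  case False
  have "\<bar>\<mu>\<bar> \<le> 1"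
    unfolding \<mu> by (rule abs_weighted_mean_le_1) (use Q f in auto)
  have "\<bar>(\<Sum>j<N. f (chunk L j s)) - real N * \<mu>\<bar> \<le> real N * \<epsilon>" if "s \<in> bitstrs (L * N)" for s
  proof -
    have "(\<Sum>j<N. \<bar>f (chunk L j s)\<bar>) \<le> (\<Sum>j<N. 1)"
      using f chunk_in_bitstrs[OF that] by (intro sum_mono) auto
    then have "\<bar>\<Sum>j<N. f (chunk L j s)\<bar> \<le> real N"
      by (intro order_trans[OF sum_abs]) simp
    moreover have "\<bar>real N * \<mu>\<bar> \<le> real N"
      using \<open>\<bar>\<mu>\<bar> \<le> 1\<close> by (simp add: abs_mult mult_left_le)
    moreover have "real N * 2 \<le> real N * \<epsilon>"
      using False by (intro mult_left_mono) auto
    ultimately show ?thesis by linarith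
  qed
  then have empty: "?E = {}" by force
  show ?thesis unfolding empty by simp
qed

definition bell_povm :: "nat \<Rightarrow> nat \<Rightarrow> nat \<Rightarrow> bool list \<Rightarrow> bool list \<Rightarrow> complex" where
  "bell_povm n N = rank_one_povm (tensor_family (2 * n) N (bell_vec n))"

lemma povm_bell: "povm (n * (2 * N)) (to_nat ` bitstrs (n * (2 * N))) (bell_povm n N)"
proof -
  have "povm (2 * n * N) (to_nat ` bitstrs (2 * n * N)) (bell_povm n N)"
    unfolding bell_povm_def
    by (intro povm_rank_one finite_bitstrs tensor_family_complete bell_vec_complete)
  then show ?thesis by (simp add: ac_simps)
qed

lemma tensor_pow_double:
  "tensor_pow n (2 * N) \<psi> b = (\<Prod>j<N. \<psi> (take n (chunk (2 * n) j b)) * \<psi> (drop n (chunk (2 * n) j b)))"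
proof -
  have "tensor_pow n (2 * N) \<psi> b = (\<Prod>i<2 * N. \<psi> (chunk n i b))"
    by (simp add: tensor_pow_def chunk_def)
  also have "\<dots> = (\<Prod>j<N. \<psi> (chunk n (2 * j) b) * \<psi> (chunk n (2 * j + 1) b))"
    by (induction N) (simp_all add: mult.assoc)
  finally show ?thesis
    by (simp add: chunk_def drop_take algebra_simps)
qed

lemma outcome_prob_bell:
  assumes "s \<in> bitstrs (n * (2 * N))"
  shows "outcome_prob (n * (2 * N)) (bell_povm n N) (to_nat s) (tensor_pow n (2 * N) \<psi>) =
           (\<Prod>j<N. bell_dist n \<psi> (chunk (2 * n) j s))"
proof -
  have s: "s \<in> bitstrs (2 * n * N)" using assms by (simp add: ac_simps)
  have "outcome_prob (n * (2 * N)) (bell_povm n N) (to_nat s) (tensor_pow n (2 * N) \<psi>) =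
        (cmod (\<Prod>j<N. bell_amp n \<psi> (take n (chunk (2 * n) j s)) (drop n (chunk (2 * n) j s)) /
                       of_real (sqrt (2 ^ n))))\<^sup>2"
    unfolding bell_povm_def outcome_prob_rank_one tensor_pow_double
    using tensor_family_amplitude[of "2 * n" N "bell_vec n" s "\<lambda>c. \<psi> (take n c) * \<psi> (drop n c)"]
      bell_vec_amplitude chunk_in_bitstrs[OF s]
    by (simp add: ac_simps)
  also have "\<dots> = (\<Prod>j<N. bell_dist n \<psi> (chunk (2 * n) j s))"
    by (simp add: bell_dist_def norm_divide power_divide prod_power_distrib flip: prod_norm)
  finally show ?thesis .
qed

lemma sum_prod_bell_dist:
  assumes "pure_state n \<psi>"
  shows "(\<Sum>s\<in>bitstrs (n * (2 * N)). \<Prod>j<N. bell_dist n \<psi> (chunk (2 * n) j s)) = 1"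
  using sum_prod_chunks[of "\<lambda>_. bell_dist n \<psi>" "2 * n" N] sum_bell_dist[OF assms]
  by (simp add: ac_simps)

lemma sum_outcome_prob_bell:
  assumes "P \<subseteq> bitstrs (n * (2 * N))"
  shows "(\<Sum>r\<in>to_nat ` P. outcome_prob (n * (2 * N)) (bell_povm n N) r (tensor_pow n (2 * N) \<psi>)) =
           (\<Sum>s\<in>P. \<Prod>j<N. bell_dist n \<psi> (chunk (2 * n) j s))"
  using assms by (simp add: sum.reindex inj_on_def outcome_prob_bell subset_iff)

(* from_nat r lists the N Bell outcomes, one 2n-bit block per pair of copies. *)
definition marg_est :: "nat \<Rightarrow> nat \<Rightarrow> nat \<Rightarrow> nat \<Rightarrow> (bool \<times> bool) list \<Rightarrow> real" where
  "marg_est n N r k y = (\<Sum>j<N. marg_obs n k y (chunk (2 * n) j (from_nat r))) / (real N * 2 ^ k)"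

definition marg_dev ::
    "nat \<Rightarrow> (bool list \<Rightarrow> complex) \<Rightarrow> nat \<Rightarrow> nat \<Rightarrow> (bool \<times> bool) list \<Rightarrow> bool list \<Rightarrow> real" where
  "marg_dev n \<psi> N k y s =
     \<bar>(\<Sum>j<N. marg_obs n k y (chunk (2 * n) j s)) - real N * (2 ^ k * pauli_marg n \<psi> k y)\<bar>"

lemma marg_est_error:
  fixes s :: "bool list"
  assumes "0 < N"
  shows "\<bar>marg_est n N (to_nat s) k y - pauli_marg n \<psi> k y\<bar> = marg_dev n \<psi> N k y s / (real N * 2 ^ k)"
proof -
  have "marg_est n N (to_nat s) k y - pauli_marg n \<psi> k y =
        ((\<Sum>j<N. marg_obs n k y (chunk (2 * n) j s)) - real N * (2 ^ k * pauli_marg n \<psi> k y)) /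
        (real N * 2 ^ k)"
    using assms by (simp add: marg_est_def field_simps)
  then show ?thesis by (simp add: marg_dev_def abs_divide)
qed

lemma marg_est_accurate_iff:
  fixes s :: "bool list"
  assumes "0 < N"
  shows "\<bar>marg_est n N (to_nat s) k y - pauli_marg n \<psi> k y\<bar> \<le> \<epsilon> / 2 ^ k \<longleftrightarrow>
           marg_dev n \<psi> N k y s \<le> real N * \<epsilon>"
  using assms by (simp add: marg_est_error field_simps)

lemma marg_dev_prob:
  assumes \<psi>: "pure_state n \<psi>" and \<epsilon>: "0 < \<epsilon>" and ky: "k \<le> n" "y \<in> labels k"
  shows "(\<Sum>s\<in>{s\<in>bitstrs (n * (2 * N)). real N * \<epsilon> < marg_dev n \<psi> N k y s}.
            \<Prod>j<N. bell_dist n \<psi> (chunk (2 * n) j s)) \<le> 2 * exp (- (real N * \<epsilon>\<^sup>2 / 16))"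
proof -
  have "(\<Sum>s\<in>{s\<in>bitstrs (2 * n * N). real N * \<epsilon> < marg_dev n \<psi> N k y s}.
            \<Prod>j<N. bell_dist n \<psi> (chunk (2 * n) j s)) \<le> 2 * exp (- (real N * \<epsilon>\<^sup>2 / 16))"
    unfolding marg_dev_def using ky \<epsilon>
    by (intro chernoff_two_sided bell_dist_nonneg sum_bell_dist[OF \<psi>])
      (auto simp: abs_marg_obs marg_obs_expectation)
  then show ?thesis by (simp add: ac_simps)
qed

lemma bell_sampling_failure:
  assumes \<psi>: "pure_state n \<psi>" and \<epsilon>: "0 < \<epsilon>"
  shows "(\<Sum>s\<in>{s\<in>bitstrs (n * (2 * N)). \<exists>k\<in>{1..n}. \<exists>y\<in>labels k. real N * \<epsilon> < marg_dev n \<psi> N k y s}.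
            \<Prod>j<N. bell_dist n \<psi> (chunk (2 * n) j s)) \<le> 2 * real n * 4 ^ n * exp (- (real N * \<epsilon>\<^sup>2 / 16))"
    (is "sum ?W _ \<le> _")
proof -
  define Bad where "Bad k y = {s\<in>bitstrs (n * (2 * N)). real N * \<epsilon> < marg_dev n \<psi> N k y s}" for k y
  have W_nonneg: "0 \<le> ?W s" for s
    by (intro prod_nonneg) (simp add: bell_dist_nonneg)
  have "{s\<in>bitstrs (n * (2 * N)). \<exists>k\<in>{1..n}. \<exists>y\<in>labels k. real N * \<epsilon> < marg_dev n \<psi> N k y s} =
        (\<Union>(k, y)\<in>Sigma {1..n} labels. Bad k y)"
    by (auto simp: Bad_def)
  then have "sum ?W {s\<in>bitstrs (n * (2 * N)). \<exists>k\<in>{1..n}. \<exists>y\<in>labels k. real N * \<epsilon> < marg_dev n \<psi> N k y s}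
             \<le> (\<Sum>(k, y)\<in>Sigma {1..n} labels. sum ?W (Bad k y))"
    using sum_UN_le[of "Sigma {1..n} labels" "\<lambda>(k, y). Bad k y" ?W] W_nonneg
    by (simp add: split_def Bad_def)
  also have "\<dots> = (\<Sum>k\<in>{1..n}. \<Sum>y\<in>labels k. sum ?W (Bad k y))"
    by (rule sum.Sigma[symmetric]) auto
  also have "\<dots> \<le> (\<Sum>k\<in>{1..n}. \<Sum>y\<in>labels k. 2 * exp (- (real N * \<epsilon>\<^sup>2 / 16)))"
    unfolding Bad_def using marg_dev_prob[OF \<psi> \<epsilon>] by (intro sum_mono) auto
  also have "\<dots> \<le> (\<Sum>k\<in>{1..n}. 4 ^ n * (2 * exp (- (real N * \<epsilon>\<^sup>2 / 16))))"
    by (intro sum_mono mult_right_mono) (auto simp: card_labels)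
  finally show ?thesis by simp
qed

lemma bell_sampling_success:
  assumes \<psi>: "pure_state n \<psi>" and \<epsilon>: "0 < \<epsilon>" and N: "0 < N"
  shows "1 - 2 * real n * 4 ^ n * exp (- (real N * \<epsilon>\<^sup>2 / 16)) \<le>
    (\<Sum>r\<in>{r\<in>to_nat ` bitstrs (n * (2 * N)). \<forall>k\<in>{1..n}. \<forall>y\<in>labels k.
                \<bar>marg_est n N r k y - pauli_marg n \<psi> k y\<bar> \<le> \<epsilon> / 2 ^ k}.
       outcome_prob (n * (2 * N)) (bell_povm n N) r (tensor_pow n (2 * N) \<psi>))"
proof -
  define S where "S = bitstrs (n * (2 * N))"
  define Bad where
    "Bad = {s\<in>S. \<exists>k\<in>{1..n}. \<exists>y\<in>labels k. real N * \<epsilon> < marg_dev n \<psi> N k y s}"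
  have "{r\<in>to_nat ` S. \<forall>k\<in>{1..n}. \<forall>y\<in>labels k.
           \<bar>marg_est n N r k y - pauli_marg n \<psi> k y\<bar> \<le> \<epsilon> / 2 ^ k} =
        to_nat ` {s\<in>S. \<forall>k\<in>{1..n}. \<forall>y\<in>labels k.
           \<bar>marg_est n N (to_nat s) k y - pauli_marg n \<psi> k y\<bar> \<le> \<epsilon> / 2 ^ k}"
    by auto
  also have "{s\<in>S. \<forall>k\<in>{1..n}. \<forall>y\<in>labels k.
           \<bar>marg_est n N (to_nat s) k y - pauli_marg n \<psi> k y\<bar> \<le> \<epsilon> / 2 ^ k} = S - Bad"
    by (force simp: Bad_def marg_est_accurate_iff[OF N] not_less)
  finally have "(\<Sum>r\<in>{r\<in>to_nat ` S. \<forall>k\<in>{1..n}. \<forall>y\<in>labels k.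
                \<bar>marg_est n N r k y - pauli_marg n \<psi> k y\<bar> \<le> \<epsilon> / 2 ^ k}.
               outcome_prob (n * (2 * N)) (bell_povm n N) r (tensor_pow n (2 * N) \<psi>)) =
             (\<Sum>s\<in>S. \<Prod>j<N. bell_dist n \<psi> (chunk (2 * n) j s)) -
             (\<Sum>s\<in>Bad. \<Prod>j<N. bell_dist n \<psi> (chunk (2 * n) j s))"
    by (simp add: sum_outcome_prob_bell sum_diff S_def Bad_def)
  then show ?thesis
    using sum_prod_bell_dist[OF \<psi>, of N] bell_sampling_failure[OF \<psi> \<epsilon>, of N]
    by (simp add: S_def Bad_def)
qed

lemma two_mult_le_four_power: "2 * real n \<le> 4 ^ n"
proof (induction n)
  case (Suc n)
  have "1 \<le> (4 :: real) ^ n" "2 * real (Suc n) = 2 * real n + 2" "(4 :: real) ^ Suc n = 4 * 4 ^ n"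
    by simp_all
  with Suc.IH show ?case by linarith
qed simp

lemma sample_size_suffices:
  fixes \<epsilon> \<delta> :: real
  assumes "0 < \<epsilon>" "0 < \<delta>" "\<delta> \<le> 1 / 2" "1 \<le> n"
    and N: "80 * real n * ln (1 / \<delta>) / \<epsilon>\<^sup>2 \<le> real N"
  shows "2 * real n * 4 ^ n * exp (- (real N * \<epsilon>\<^sup>2 / 16)) \<le> \<delta>"
proof -
  define L where "L = ln (1 / \<delta>)"
  have L: "ln 2 \<le> L" unfolding L_def using assms(2,3) by (intro ln_mono) (auto simp: field_simps)
  have "(16 :: real) ^ n = 4 ^ n * 4 ^ n"
    by (simp flip: power_mult_distrib)
  then have "2 * real n * 4 ^ n \<le> 16 ^ n"
    using two_mult_le_four_power[of n] by (simp add: mult_right_mono)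
  also have "\<dots> = exp (real n * (4 * ln 2))"
    by (simp add: exp_of_nat_mult ln_realpow[of 2 4, simplified, symmetric])
  also have "\<dots> \<le> exp (4 * real n * L)"
    using mult_left_mono[OF L, of "4 * real n"] by (simp add: ac_simps)
  finally have "2 * real n * 4 ^ n * exp (- (real N * \<epsilon>\<^sup>2 / 16)) \<le>
                exp (4 * real n * L) * exp (- (real N * \<epsilon>\<^sup>2 / 16))"
    by (simp add: mult_right_mono)
  also have "\<dots> \<le> exp (- L)"
  proof -
    have "5 * real n * L \<le> real N * \<epsilon>\<^sup>2 / 16"
      using N assms(1) by (simp add: L_def field_simps)
    moreover have "0 \<le> L"
      using L ln_ge_zero[of "2 :: real"] by linarith
    then have "L \<le> real n * L"
      using mult_right_mono[of 1 "real n" L] assms(4) by simp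
    ultimately show ?thesis by (simp flip: exp_add)
  qed
  also have "\<dots> = \<delta>"
    using assms(2) by (simp add: L_def ln_div)
  finally show ?thesis .
qed

lemma bell_sampling_learns_marginals:
  fixes \<epsilon> \<delta> :: real
  assumes \<psi>: "pure_state n \<psi>" and \<epsilon>: "0 < \<epsilon>" and \<delta>: "0 < \<delta>" "\<delta> \<le> 1 / 2"
    and N: "80 * real n * ln (1 / \<delta>) / \<epsilon>\<^sup>2 \<le> real N"
  shows "1 - \<delta> \<le>
    (\<Sum>r\<in>{r\<in>to_nat ` bitstrs (n * (2 * N)). \<forall>k\<in>{1..n}. \<forall>y\<in>labels k.
                \<bar>marg_est n N r k y - pauli_marg n \<psi> k y\<bar> \<le> \<epsilon> / 2 ^ k}.
       outcome_prob (n * (2 * N)) (bell_povm n N) r (tensor_pow n (2 * N) \<psi>))"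
proof (cases "n = 0")
  case True
  then have "{r\<in>to_nat ` bitstrs (n * (2 * N)). \<forall>k\<in>{1..n}. \<forall>y\<in>labels k.
               \<bar>marg_est n N r k y - pauli_marg n \<psi> k y\<bar> \<le> \<epsilon> / 2 ^ k} = to_nat ` bitstrs (n * (2 * N))"
    by auto
  then show ?thesis
    using \<delta> sum_outcome_prob_bell[OF order_refl, of n N \<psi>] sum_prod_bell_dist[OF \<psi>, of N]
    by simp
next
  case False
  then have "0 < 80 * real n * ln (1 / \<delta>) / \<epsilon>\<^sup>2"
    using \<epsilon> \<delta> by simp
  then have "0 < N" using N by linarith
  have "2 * real n * 4 ^ n * exp (- (real N * \<epsilon>\<^sup>2 / 16)) \<le> \<delta>"
    using sample_size_suffices[OF \<epsilon> \<delta> _ N] False by simp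
  then show ?thesis
    using bell_sampling_success[OF \<psi> \<epsilon> \<open>0 < N\<close>] by linarith
qed

theorem lemma12:
  shows "\<exists>C>0. \<forall>(n::nat) (\<epsilon>::real) (\<delta>::real) (N::nat).
     0 < \<epsilon> \<longrightarrow> 0 < \<delta> \<longrightarrow> \<delta> \<le> 1/2 \<longrightarrow>
     real N \<ge> C * real n * ln (1 / \<delta>) / \<epsilon>^2 \<longrightarrow>
     (\<exists>(\<Omega>::nat set) E (est :: nat \<Rightarrow> nat \<Rightarrow> (bool \<times> bool) list \<Rightarrow> real).
        povm (n * (2 * N)) \<Omega> E \<and>
        (\<forall>\<psi>. pure_state n \<psi> \<longrightarrow>
           (\<Sum>r\<in>{r\<in>\<Omega>. \<forall>k\<in>{1..n}. \<forall>y\<in>labels k.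
                      \<bar>est r k y - pauli_marg n \<psi> k y\<bar> \<le> \<epsilon> / 2^k}.
               outcome_prob (n * (2 * N)) E r (tensor_pow n (2 * N) \<psi>)) \<ge> 1 - \<delta>))"
proof (intro exI[of _ 80] conjI allI impI)
  fix n N :: nat and \<epsilon> \<delta> :: real
  assume "0 < \<epsilon>" "0 < \<delta>" "\<delta> \<le> 1/2" "real N \<ge> 80 * real n * ln (1 / \<delta>) / \<epsilon>^2"
  then show "\<exists>\<Omega> E est. povm (n * (2 * N)) \<Omega> E \<and>
        (\<forall>\<psi>. pure_state n \<psi> \<longrightarrow>
           (\<Sum>r\<in>{r\<in>\<Omega>. \<forall>k\<in>{1..n}. \<forall>y\<in>labels k.
                      \<bar>est r k y - pauli_marg n \<psi> k y\<bar> \<le> \<epsilon> / 2^k}.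
               outcome_prob (n * (2 * N)) E r (tensor_pow n (2 * N) \<psi>)) \<ge> 1 - \<delta>)"
    using povm_bell bell_sampling_learns_marginals by blast
qed simp

end
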